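(* The Sorgenfrey line $\mathbb S$ is homeomorphic to $\langle{}^\omega\omega,\sigma_{\mathbb S}\rangle$.
   Context: $\mathbb S$ is $\mathbb R$ with the topology generated by $\{[a,b):a,b\in\mathbb R\}$. ${}^\omega\omega$ is the set of infinite sequences of naturals; for $a,b\in{}^\omega\omega$, $a\triangleleft b$ iff there is $n$ with $a\upharpoonright n=b\upharpoonright n$ and $a(n)<b(n)$. $\sigma_{\mathbb S}$ is the topology on ${}^\omega\omega$ with base consisting of the sets $B(p,m)=\{p\}\cup\{r\in{}^\omega\omega: r\upharpoonright m=p\upharpoonright m,\ p\triangleleft r\}$, $p\in{}^\omega\omega$, $m\in\omega$. *)

theory Defs
  imports "HOL-Analysis.Analysis"
begin

definition sorgenfrey :: "real topology" where
  "sorgenfrey = topology_generated_by {{a..<b} | a b. True}"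

definition lex_less :: "(nat \<Rightarrow> nat) \<Rightarrow> (nat \<Rightarrow> nat) \<Rightarrow> bool" where
  "lex_less a b \<longleftrightarrow> (\<exists>n. (\<forall>i<n. a i = b i) \<and> a n < b n)"

definition sigmaS_basic :: "(nat \<Rightarrow> nat) \<Rightarrow> nat \<Rightarrow> (nat \<Rightarrow> nat) set" where
  "sigmaS_basic p m = {p} \<union> {r. (\<forall>i<m. r i = p i) \<and> lex_less p r}"

definition sigmaS :: "(nat \<Rightarrow> nat) topology" where
  "sigmaS = topology_generated_by {sigmaS_basic p m | p m. True}"

end

(* A sequence y codes a point of [0,1) by nested half-open intervals: [0,1) is cut at the
   points 1 - 2^-k into the intervals [1 - 2^-k, 1 - 2^-(k+1)), the interval of y 0 is cut in
   the same way after rescaling, and so on. The lengths shrink geometrically, so this is a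
   bijection of Baire space onto [0,1) that is strictly increasing for the lexicographic order.
   Hence it maps each basic set B(p,m) onto a half-open interval starting at the image of p,
   of length at most 2^-m, and each interval [x, x + e) contains such an image. Spending the first coordinate on
   the integer part turns it into a bijection onto the reals with the same two properties,
   which is exactly a homeomorphism of the two topologies. *)

theory Submission
  imports Defs
begin

(* [cyl_lo s, cyl_hi s) is the interval coded by the finite sequence s; the intervals of
   s @ [k], k = 0, 1, ..., tile it from left to right. *)
fun cyl_lo :: "nat list \<Rightarrow> real" where
  "cyl_lo [] = 0"
| "cyl_lo (k # s) = 1 - (1/2)^k + (1/2)^Suc k * cyl_lo s"

fun cyl_len :: "nat list \<Rightarrow> real" where
  "cyl_len [] = 1"
| "cyl_len (k # s) = (1/2)^Suc k * cyl_len s"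

definition cyl_hi :: "nat list \<Rightarrow> real" where
  "cyl_hi s = cyl_lo s + cyl_len s"

lemma cyl_len_pos: "0 < cyl_len s"
  by (induction s) auto

lemma cyl_len_le: "cyl_len s \<le> (1/2)^length s"
proof (induction s)
  case (Cons k s)
  have "(1/2::real)^Suc k * cyl_len s \<le> 1/2 * (1/2)^length s"
    using Cons cyl_len_pos[of s] by (intro mult_mono) (auto simp: power_le_one)
  then show ?case by simp
qed simp

lemma cyl_lo_nonneg: "0 \<le> cyl_lo s"
proof (induction s)
  case (Cons k s)
  have "(1/2::real)^k \<le> 1" by (simp add: power_le_one)
  with Cons show ?case by simp
qed simp

lemma cyl_hi_le_1: "cyl_hi s \<le> 1"
proof (induction s)
  case (Cons k s)
  have "cyl_hi (k # s) = 1 - (1/2)^k + (1/2)^Suc k * cyl_hi s"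
    by (simp add: cyl_hi_def algebra_simps)
  also have "\<dots> \<le> 1 - (1/2)^k + (1/2)^Suc k"
    using Cons by (intro add_left_mono mult_left_le) auto
  also have "\<dots> \<le> 1" by simp
  finally show ?case .
qed (simp add: cyl_hi_def)

lemma cyl_lo_append: "cyl_lo (s @ t) = cyl_lo s + cyl_len s * cyl_lo t"
  by (induction s) (auto simp: algebra_simps)

lemma cyl_len_append: "cyl_len (s @ t) = cyl_len s * cyl_len t"
  by (induction s) auto

lemma cyl_hi_append: "cyl_hi (s @ t) = cyl_lo s + cyl_len s * cyl_hi t"
  by (simp add: cyl_hi_def cyl_lo_append cyl_len_append algebra_simps)

lemma cyl_lo_append_ge: "cyl_lo s \<le> cyl_lo (s @ t)"
  using cyl_len_pos[of s] cyl_lo_nonneg[of t] by (simp add: cyl_lo_append)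

lemma cyl_hi_append_le: "cyl_hi (s @ t) \<le> cyl_hi s"
proof -
  have "cyl_hi (s @ t) \<le> cyl_lo s + cyl_len s * 1"
    unfolding cyl_hi_append using cyl_len_pos[of s] cyl_hi_le_1[of t]
    by (intro add_left_mono mult_left_mono) auto
  then show ?thesis by (simp add: cyl_hi_def)
qed

lemma cyl_hi_snoc_le_cyl_lo_snoc:
  assumes "k < k'"
  shows "cyl_hi (s @ [k]) \<le> cyl_lo (s @ [k'])"
proof -
  have "(1/2::real)^k' \<le> (1/2)^Suc k" using assms by (intro power_decreasing) auto
  then show ?thesis unfolding cyl_hi_append cyl_lo_append using cyl_len_pos[of s]
    by (intro add_left_mono mult_left_mono) (auto simp: cyl_hi_def)
qed

lemma cyl_hi_snoc_less: "cyl_hi (s @ [k]) < cyl_hi s"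
proof -
  have "cyl_hi (s @ [k]) < cyl_lo s + cyl_len s * 1"
    unfolding cyl_hi_append using cyl_len_pos[of s]
    by (intro add_strict_left_mono mult_strict_left_mono) (auto simp: cyl_hi_def)
  then show ?thesis by (simp add: cyl_hi_def)
qed

definition seq_take :: "(nat \<Rightarrow> nat) \<Rightarrow> nat \<Rightarrow> nat list" where
  "seq_take y n = map y [0..<n]"

lemma seq_take_0 [simp]: "seq_take y 0 = []"
  by (simp add: seq_take_def)

lemma seq_take_Suc: "seq_take y (Suc n) = seq_take y n @ [y n]"
  by (simp add: seq_take_def)

lemma length_seq_take [simp]: "length (seq_take y n) = n"
  by (simp add: seq_take_def)

lemma seq_take_eq_iff: "seq_take y n = seq_take z n \<longleftrightarrow> (\<forall>i<n. y i = z i)"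
  by (auto simp: seq_take_def map_eq_conv)

lemma seq_take_append: "m \<le> n \<Longrightarrow> seq_take y n = seq_take y m @ map y [m..<n]"
  unfolding seq_take_def by (metis map_append le_add_diff_inverse upt_add_eq_append zero_le)

lemma cyl_lo_seq_take_mono: "m \<le> n \<Longrightarrow> cyl_lo (seq_take y m) \<le> cyl_lo (seq_take y n)"
  using cyl_lo_append_ge by (simp add: seq_take_append)

lemma cyl_hi_seq_take_antimono: "m \<le> n \<Longrightarrow> cyl_hi (seq_take y n) \<le> cyl_hi (seq_take y m)"
  using cyl_hi_append_le by (simp add: seq_take_append)

lemma cyl_lo_le_cyl_hi_seq_take: "cyl_lo (seq_take y n) \<le> cyl_hi (seq_take y m)"
proof -
  let ?k = "max n m"
  have "cyl_lo (seq_take y n) \<le> cyl_lo (seq_take y ?k)" by (rule cyl_lo_seq_take_mono) simp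
  also have "\<dots> \<le> cyl_hi (seq_take y ?k)" using cyl_len_pos by (simp add: cyl_hi_def less_imp_le)
  also have "\<dots> \<le> cyl_hi (seq_take y m)" by (rule cyl_hi_seq_take_antimono) simp
  finally show ?thesis .
qed

lemma first_difference:
  fixes y z :: "nat \<Rightarrow> 'a"
  assumes "y i \<noteq> z i"
  obtains j where "j \<le> i" "\<forall>k<j. y k = z k" "y j \<noteq> z j"
  using ex_least_nat_le[of "\<lambda>j. y j \<noteq> z j", OF assms] by blast

lemma cyl_hi_le_cyl_lo_seq_take:
  assumes "\<forall>j<i. y j = z j" "y i < z i" "i < n"
  shows "cyl_hi (seq_take y n) \<le> cyl_lo (seq_take z n)"
proof -
  have common: "seq_take y i = seq_take z i" using assms(1) by (simp add: seq_take_eq_iff)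
  have "cyl_hi (seq_take y n) \<le> cyl_hi (seq_take y (Suc i))"
    using assms(3) by (intro cyl_hi_seq_take_antimono) simp
  also have "\<dots> \<le> cyl_lo (seq_take z (Suc i))"
    unfolding seq_take_Suc common using assms(2) by (rule cyl_hi_snoc_le_cyl_lo_snoc)
  also have "\<dots> \<le> cyl_lo (seq_take z n)"
    using assms(3) by (intro cyl_lo_seq_take_mono) simp
  finally show ?thesis .
qed

lemma lex_less_linear:
  assumes "y \<noteq> z"
  shows "lex_less y z \<or> lex_less z y"
proof -
  obtain i where "y i \<noteq> z i" using assms by auto
  then obtain j where "\<forall>k<j. y k = z k" "y j \<noteq> z j" by (rule first_difference)
  then show ?thesis unfolding lex_less_def by (metis linorder_neqE_nat)
qed

lemma lex_less_trans:
  assumes "lex_less x y" "lex_less y z"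
  shows "lex_less x z"
proof -
  obtain i where i: "\<forall>k<i. x k = y k" "x i < y i" using assms(1) unfolding lex_less_def by blast
  obtain j where j: "\<forall>k<j. y k = z k" "y j < z j" using assms(2) unfolding lex_less_def by blast
  have "\<forall>k<min i j. x k = z k" using i j by simp
  moreover have "x (min i j) < z (min i j)"
    by (cases i j rule: linorder_cases) (use i j in auto)
  ultimately show ?thesis unfolding lex_less_def by blast
qed

lemma lex_less_Suc_iff:
  assumes "x 0 = y 0"
  shows "lex_less x y \<longleftrightarrow> lex_less (x \<circ> Suc) (y \<circ> Suc)"
proof
  assume "lex_less x y"
  then obtain n where n: "\<forall>i<n. x i = y i" "x n < y n" unfolding lex_less_def by blast
  with assms obtain n' where "n = Suc n'" by (cases n) auto
  with n show "lex_less (x \<circ> Suc) (y \<circ> Suc)" unfolding lex_less_def by auto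
next
  assume "lex_less (x \<circ> Suc) (y \<circ> Suc)"
  then obtain n where n: "\<forall>i<n. x (Suc i) = y (Suc i)" "x (Suc n) < y (Suc n)"
    unfolding lex_less_def by auto
  with assms have "\<forall>i<Suc n. x i = y i" by (simp add: All_less_Suc2)
  with n show "lex_less x y" unfolding lex_less_def by blast
qed

lemma fun_eq_Suc_iff: "x = y \<longleftrightarrow> x 0 = y 0 \<and> x \<circ> Suc = y \<circ> Suc"
  by (auto simp: fun_eq_iff) (metis not0_implies_Suc)

definition baire_to_unit :: "(nat \<Rightarrow> nat) \<Rightarrow> real" where
  "baire_to_unit y = (SUP n. cyl_lo (seq_take y n))"

lemma baire_to_unit_in_cyl:
  "cyl_lo (seq_take y n) \<le> baire_to_unit y \<and> baire_to_unit y < cyl_hi (seq_take y n)"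
proof
  have bdd: "bdd_above (range (\<lambda>n. cyl_lo (seq_take y n)))"
    using cyl_lo_le_cyl_hi_seq_take by (auto intro!: bdd_aboveI)
  show "cyl_lo (seq_take y n) \<le> baire_to_unit y"
    unfolding baire_to_unit_def by (rule cSUP_upper[OF _ bdd]) simp
  have "baire_to_unit y \<le> cyl_hi (seq_take y (Suc n))"
    unfolding baire_to_unit_def by (rule cSUP_least) (auto intro: cyl_lo_le_cyl_hi_seq_take)
  also have "\<dots> < cyl_hi (seq_take y n)"
    unfolding seq_take_Suc by (rule cyl_hi_snoc_less)
  finally show "baire_to_unit y < cyl_hi (seq_take y n)" .
qed

lemma baire_to_unit_range: "0 \<le> baire_to_unit y \<and> baire_to_unit y < 1"
  using baire_to_unit_in_cyl[of y 0] by (simp add: cyl_hi_def)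

lemma baire_to_unit_eqI:
  assumes "\<And>n. cyl_lo (seq_take y n) \<le> t \<and> t < cyl_hi (seq_take y n)"
  shows "baire_to_unit y = t"
proof (rule ccontr)
  assume "baire_to_unit y \<noteq> t"
  then obtain n where n: "(1/2::real)^n < \<bar>baire_to_unit y - t\<bar>"
    using real_arch_pow_inv[of "\<bar>baire_to_unit y - t\<bar>" "1/2"] by auto
  have "cyl_len (seq_take y n) \<le> (1/2)^n"
    using cyl_len_le[of "seq_take y n"] by simp
  with n assms[of n] baire_to_unit_in_cyl[of y n] show False
    unfolding cyl_hi_def by linarith
qed

lemma baire_to_unit_strict_mono: "lex_less y z \<Longrightarrow> baire_to_unit y < baire_to_unit z"
proof -
  assume "lex_less y z"
  then obtain i where i: "\<forall>j<i. y j = z j" "y i < z i" unfolding lex_less_def by blast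
  have "baire_to_unit y < cyl_hi (seq_take y (Suc i))" using baire_to_unit_in_cyl by blast
  also have "\<dots> \<le> cyl_lo (seq_take z (Suc i))" using i by (intro cyl_hi_le_cyl_lo_seq_take) auto
  also have "\<dots> \<le> baire_to_unit z" using baire_to_unit_in_cyl by blast
  finally show ?thesis .
qed

lemma inj_baire_to_unit: "inj baire_to_unit"
  by (rule injI) (metis lex_less_linear baire_to_unit_strict_mono less_irrefl)

lemma baire_to_unit_in_cyl_iff:
  "cyl_lo (seq_take p m) \<le> baire_to_unit z \<and> baire_to_unit z < cyl_hi (seq_take p m)
    \<longleftrightarrow> seq_take z m = seq_take p m"
proof
  assume z: "cyl_lo (seq_take p m) \<le> baire_to_unit z \<and> baire_to_unit z < cyl_hi (seq_take p m)"
  show "seq_take z m = seq_take p m"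
  proof (rule ccontr)
    assume "seq_take z m \<noteq> seq_take p m"
    then obtain i where "i < m" and "z i \<noteq> p i" by (auto simp: seq_take_eq_iff)
    from \<open>z i \<noteq> p i\<close> obtain j where j: "j \<le> i" "\<forall>k<j. z k = p k" "z j \<noteq> p j"
      by (rule first_difference)
    show False
    proof (cases "z j < p j")
      case True
      then have "cyl_hi (seq_take z m) \<le> cyl_lo (seq_take p m)"
        using j \<open>i < m\<close> by (intro cyl_hi_le_cyl_lo_seq_take[of j]) auto
      then show False using z baire_to_unit_in_cyl[of z m] by linarith
    next
      case False
      then have "cyl_hi (seq_take p m) \<le> cyl_lo (seq_take z m)"
        using j \<open>i < m\<close> by (intro cyl_hi_le_cyl_lo_seq_take[of j]) auto
      then show False using z baire_to_unit_in_cyl[of z m] by linarith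
    qed
  qed
qed (metis baire_to_unit_in_cyl)

definition digit :: "real \<Rightarrow> nat" where
  "digit t = (LEAST k. t < cyl_hi [k])"

definition digit_shift :: "real \<Rightarrow> real" where
  "digit_shift t = (t - cyl_lo [digit t]) / cyl_len [digit t]"

lemma cyl_hi_singleton: "cyl_hi [k] = 1 - (1/2)^Suc k"
  by (simp add: cyl_hi_def)

lemma digit_in_cyl:
  assumes "0 \<le> t" "t < 1"
  shows "cyl_lo [digit t] \<le> t \<and> t < cyl_hi [digit t]"
proof -
  obtain n where n: "(1/2::real)^n < 1 - t" using real_arch_pow_inv[of "1 - t" "1/2"] assms by auto
  have "(1/2::real)^Suc n \<le> (1/2)^n" by (rule power_decreasing) auto
  then have "t < cyl_hi [n]" using n unfolding cyl_hi_singleton by linarith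
  then obtain k where k: "\<forall>i<k. \<not> t < cyl_hi [i]" "t < cyl_hi [k]"
    using ex_least_nat_le[of "\<lambda>k. t < cyl_hi [k]"] by blast
  then have "digit t = k" unfolding digit_def by (intro Least_equality) (auto intro: leI)
  moreover have "cyl_lo [k] \<le> t"
  proof (cases k)
    case (Suc j)
    then have "\<not> t < cyl_hi [j]" using k(1) by simp
    then show ?thesis using Suc by (simp add: cyl_hi_singleton)
  qed (simp add: assms)
  ultimately show ?thesis using k(2) by simp
qed

lemma digit_shift_range:
  assumes "0 \<le> t" "t < 1"
  shows "0 \<le> digit_shift t \<and> digit_shift t < 1"
proof -
  let ?k = "digit t"
  have "cyl_lo [?k] \<le> t" "t - cyl_lo [?k] < cyl_len [?k]"
    using digit_in_cyl[OF assms] by (auto simp only: cyl_hi_def)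
  then show ?thesis using cyl_len_pos[of "[?k]"] unfolding digit_shift_def by simp
qed

lemma digit_shift_eq: "cyl_lo [digit t] + cyl_len [digit t] * digit_shift t = t"
  using cyl_len_pos[of "[digit t]"] unfolding digit_shift_def
  by (simp del: cyl_lo.simps cyl_len.simps)

lemma baire_to_unit_surj:
  assumes "0 \<le> t" "t < 1"
  shows "\<exists>y. baire_to_unit y = t"
proof -
  define r where "r n = (digit_shift ^^ n) t" for n
  define y where "y n = digit (r n)" for n
  have r_range: "0 \<le> r n \<and> r n < 1" for n
    by (induction n) (simp_all add: r_def assms digit_shift_range)
  have expansion: "cyl_lo (seq_take y n) + cyl_len (seq_take y n) * r n = t" for n
  proof (induction n)
    case (Suc n)
    have "r n = cyl_lo [y n] + cyl_len [y n] * r (Suc n)"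
      unfolding y_def r_def by (simp add: digit_shift_eq del: cyl_lo.simps cyl_len.simps)
    then show ?case using Suc unfolding seq_take_Suc cyl_lo_append cyl_len_append
      by (simp add: algebra_simps del: cyl_lo.simps cyl_len.simps)
  qed (simp add: r_def)
  have "cyl_lo (seq_take y n) \<le> t \<and> t < cyl_hi (seq_take y n)" for n
  proof -
    have "0 \<le> cyl_len (seq_take y n) * r n" "cyl_len (seq_take y n) * r n < cyl_len (seq_take y n)"
      using r_range[of n] cyl_len_pos[of "seq_take y n"] by simp_all
    then show ?thesis using expansion[of n] unfolding cyl_hi_def by linarith
  qed
  then show ?thesis by (blast intro: baire_to_unit_eqI)
qed

lemma baire_to_unit_basic:
  "baire_to_unit ` sigmaS_basic p m = {baire_to_unit p ..< cyl_hi (seq_take p m)}"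
proof
  show "baire_to_unit ` sigmaS_basic p m \<subseteq> {baire_to_unit p ..< cyl_hi (seq_take p m)}"
  proof (rule image_subsetI)
    fix r assume "r \<in> sigmaS_basic p m"
    then consider "r = p" | "seq_take r m = seq_take p m" "lex_less p r"
      unfolding sigmaS_basic_def by (auto simp: seq_take_eq_iff)
    then show "baire_to_unit r \<in> {baire_to_unit p ..< cyl_hi (seq_take p m)}"
    proof cases
      case 1
      then show ?thesis using baire_to_unit_in_cyl[of p m] by simp
    next
      case 2
      then show ?thesis using baire_to_unit_strict_mono[of p r] baire_to_unit_in_cyl[of r m] by simp
    qed
  qed
  show "{baire_to_unit p ..< cyl_hi (seq_take p m)} \<subseteq> baire_to_unit ` sigmaS_basic p m"
  proof
    fix t assume t: "t \<in> {baire_to_unit p ..< cyl_hi (seq_take p m)}"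
    moreover have "0 \<le> baire_to_unit p" "cyl_hi (seq_take p m) \<le> 1"
      using baire_to_unit_range cyl_hi_le_1 by auto
    ultimately obtain r where r: "baire_to_unit r = t" using baire_to_unit_surj by force
    have "cyl_lo (seq_take p m) \<le> baire_to_unit p" using baire_to_unit_in_cyl by blast
    with r t have "seq_take r m = seq_take p m" by (auto simp: baire_to_unit_in_cyl_iff[symmetric])
    moreover have "r = p \<or> lex_less p r"
      using lex_less_linear[of p r] baire_to_unit_strict_mono[of r p] r t by force
    ultimately show "t \<in> baire_to_unit ` sigmaS_basic p m"
      using r unfolding sigmaS_basic_def by (auto simp: seq_take_eq_iff)
  qed
qed

lemma sigmaS_basic_antimono: "m \<le> m' \<Longrightarrow> sigmaS_basic q m' \<subseteq> sigmaS_basic q m"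
  unfolding sigmaS_basic_def by auto

lemma sigmaS_basic_subset: "q \<in> sigmaS_basic p m \<Longrightarrow> sigmaS_basic q m \<subseteq> sigmaS_basic p m"
  unfolding sigmaS_basic_def using lex_less_trans by auto

lemma sigmaS_basic_Suc:
  "sigmaS_basic q (Suc m) = {r. r 0 = q 0 \<and> r \<circ> Suc \<in> sigmaS_basic (q \<circ> Suc) m}"
  unfolding sigmaS_basic_def using lex_less_Suc_iff[of q] fun_eq_Suc_iff[of _ q]
  by (auto simp: All_less_Suc2)

lemma openin_sigmaS: "openin sigmaS U \<longleftrightarrow> (\<forall>q\<in>U. \<exists>m. sigmaS_basic q m \<subseteq> U)"
proof
  assume "openin sigmaS U"
  then have "generate_topology_on {sigmaS_basic p m | p m. True} U"
    unfolding sigmaS_def openin_topology_generated_by_iff .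
  then show "\<forall>q\<in>U. \<exists>m. sigmaS_basic q m \<subseteq> U"
  proof induction
    case (Int a b)
    show ?case
    proof
      fix q assume "q \<in> a \<inter> b"
      then obtain m m' where "sigmaS_basic q m \<subseteq> a" "sigmaS_basic q m' \<subseteq> b" using Int.IH by blast
      moreover have "sigmaS_basic q (max m m') \<subseteq> sigmaS_basic q m \<inter> sigmaS_basic q m'"
        using sigmaS_basic_antimono by simp
      ultimately have "sigmaS_basic q (max m m') \<subseteq> a \<inter> b" by blast
      then show "\<exists>m. sigmaS_basic q m \<subseteq> a \<inter> b" ..
    qed
  next
    case (UN K)
    then show ?case by blast
  next
    case (Basis s)
    then show ?case using sigmaS_basic_subset by blast
  qed simp
next
  assume "\<forall>q\<in>U. \<exists>m. sigmaS_basic q m \<subseteq> U"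
  moreover have "q \<in> sigmaS_basic q m" "openin sigmaS (sigmaS_basic q m)" for q m
    unfolding sigmaS_def by (auto simp: sigmaS_basic_def intro: topology_generated_by_Basis)
  ultimately show "openin sigmaS U"
    by (subst openin_subopen) (meson subsetD)
qed

lemma openin_sorgenfrey: "openin sorgenfrey U \<longleftrightarrow> (\<forall>x\<in>U. \<exists>e>0. {x..<x + e} \<subseteq> U)"
proof
  assume "openin sorgenfrey U"
  then have "generate_topology_on {{a..<b} | a b. True} U"
    unfolding sorgenfrey_def openin_topology_generated_by_iff .
  then show "\<forall>x\<in>U. \<exists>e>0. {x..<x + e} \<subseteq> U"
  proof induction
    case (Int a b)
    show ?case
    proof
      fix x assume "x \<in> a \<inter> b"
      then obtain e e' where "e > 0" "{x..<x + e} \<subseteq> a" "e' > 0" "{x..<x + e'} \<subseteq> b"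
        using Int.IH by (meson IntD1 IntD2)
      moreover have "{x..<x + min e e'} \<subseteq> {x..<x + e} \<inter> {x..<x + e'}" by auto
      ultimately have "{x..<x + min e e'} \<subseteq> a \<inter> b" by blast
      with \<open>e > 0\<close> \<open>e' > 0\<close> show "\<exists>e>0. {x..<x + e} \<subseteq> a \<inter> b"
        by (intro exI[of _ "min e e'"]) simp
    qed
  next
    case (UN K)
    then show ?case by (meson Union_iff Sup_upper order_trans)
  next
    case (Basis s)
    then obtain a b where s: "s = {a..<b}" by blast
    show ?case
    proof
      fix x assume "x \<in> s"
      then have "b - x > 0" "{x..<x + (b - x)} \<subseteq> s" using s by auto
      then show "\<exists>e>0. {x..<x + e} \<subseteq> s" by blast
    qed
  qed simp
next
  assume U: "\<forall>x\<in>U. \<exists>e>0. {x..<x + e} \<subseteq> U"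
  show "openin sorgenfrey U"
  proof (subst openin_subopen, intro ballI)
    fix x assume "x \<in> U"
    then obtain e where "e > 0" "{x..<x + e} \<subseteq> U" using U by blast
    moreover have "openin sorgenfrey {x..<x + e}"
      unfolding sorgenfrey_def by (auto intro: topology_generated_by_Basis)
    ultimately show "\<exists>T. openin sorgenfrey T \<and> x \<in> T \<and> T \<subseteq> U" by auto
  qed
qed

lemma topspace_sigmaS [simp]: "topspace sigmaS = UNIV"
proof -
  have "openin sigmaS UNIV" unfolding openin_sigmaS by simp
  then show ?thesis using openin_subset by blast
qed

lemma topspace_sorgenfrey [simp]: "topspace sorgenfrey = UNIV"
proof -
  have "openin sorgenfrey UNIV" unfolding openin_sorgenfrey by (intro ballI exI[of _ 1]) simp
  then show ?thesis using openin_subset by blast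
qed

(* int_decode is not monotone, but basic sets B(q, Suc m) fix the first coordinate, so only the
   tail has to respect the lexicographic order. *)
definition baire_to_real :: "(nat \<Rightarrow> nat) \<Rightarrow> real" where
  "baire_to_real x = of_int (int_decode (x 0)) + baire_to_unit (x \<circ> Suc)"

lemma floor_baire_to_real: "\<lfloor>baire_to_real x\<rfloor> = int_decode (x 0)"
  unfolding baire_to_real_def using baire_to_unit_range[of "x \<circ> Suc"] by (intro floor_unique) auto

lemma bij_baire_to_real: "bij baire_to_real"
proof (rule bijI)
  show "inj baire_to_real"
  proof (rule injI)
    fix x y assume eq: "baire_to_real x = baire_to_real y"
    then have "x 0 = y 0" by (metis floor_baire_to_real int_decode_eq)
    with eq have "baire_to_unit (x \<circ> Suc) = baire_to_unit (y \<circ> Suc)"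
      by (simp add: baire_to_real_def)
    then have "x \<circ> Suc = y \<circ> Suc" using inj_baire_to_unit by (simp add: inj_eq)
    with \<open>x 0 = y 0\<close> show "x = y" using fun_eq_Suc_iff by blast
  qed
  have "u \<in> range baire_to_real" for u :: real
  proof -
    have "0 \<le> u - of_int \<lfloor>u\<rfloor>" "u - of_int \<lfloor>u\<rfloor> < 1" by linarith+
    then obtain y where y: "baire_to_unit y = u - of_int \<lfloor>u\<rfloor>"
      using baire_to_unit_surj by blast
    have "baire_to_real (case_nat (int_encode \<lfloor>u\<rfloor>) y) = u"
      by (simp add: baire_to_real_def y comp_def)
    then show ?thesis by (metis rangeI)
  qed
  then show "surj baire_to_real" by blast
qed

lemma baire_to_real_basic:
  obtains d where "0 < d" "d \<le> (1/2)^m"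
    "baire_to_real ` sigmaS_basic q (Suc m) = {baire_to_real q ..< baire_to_real q + d}"
proof
  let ?c = "of_int (int_decode (q 0)) :: real" and ?s = "seq_take (q \<circ> Suc) m"
  define d where "d = cyl_hi ?s - baire_to_unit (q \<circ> Suc)"
  show "0 < d" using baire_to_unit_in_cyl[of "q \<circ> Suc" m] by (simp add: d_def)
  have "d \<le> cyl_len ?s"
    using baire_to_unit_in_cyl[of "q \<circ> Suc" m] by (simp add: d_def cyl_hi_def)
  then show "d \<le> (1/2)^m" using cyl_len_le[of ?s] by simp
  have "baire_to_real ` sigmaS_basic q (Suc m) = (\<lambda>t. ?c + t) ` baire_to_unit ` sigmaS_basic (q \<circ> Suc) m"
    unfolding sigmaS_basic_Suc image_image
  proof (intro equalityI subsetI)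
    fix u assume "u \<in> baire_to_real ` {r. r 0 = q 0 \<and> r \<circ> Suc \<in> sigmaS_basic (q \<circ> Suc) m}"
    then show "u \<in> (\<lambda>y. ?c + baire_to_unit y) ` sigmaS_basic (q \<circ> Suc) m"
      by (auto simp: baire_to_real_def)
  next
    fix u assume "u \<in> (\<lambda>y. ?c + baire_to_unit y) ` sigmaS_basic (q \<circ> Suc) m"
    then obtain y where "y \<in> sigmaS_basic (q \<circ> Suc) m" "u = ?c + baire_to_unit y" by blast
    moreover have "case_nat (q 0) y \<circ> Suc = y" by (simp add: comp_def)
    ultimately show "u \<in> baire_to_real ` {r. r 0 = q 0 \<and> r \<circ> Suc \<in> sigmaS_basic (q \<circ> Suc) m}"
      by (intro image_eqI[of _ _ "case_nat (q 0) y"]) (auto simp: baire_to_real_def)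
  qed
  also have "\<dots> = {baire_to_real q ..< baire_to_real q + d}"
    unfolding baire_to_unit_basic by (simp add: d_def baire_to_real_def add.commute)
  finally show "baire_to_real ` sigmaS_basic q (Suc m) = {baire_to_real q ..< baire_to_real q + d}" .
qed

lemma continuous_map_baire_to_real: "continuous_map sigmaS sorgenfrey baire_to_real"
  unfolding continuous_map_openin_preimage_eq
proof (intro conjI allI impI)
  show "baire_to_real \<in> topspace sigmaS \<rightarrow> topspace sorgenfrey" by simp
  fix U assume "openin sorgenfrey U"
  show "openin sigmaS (topspace sigmaS \<inter> baire_to_real -` U)"
    unfolding openin_sigmaS
  proof
    fix q assume "q \<in> topspace sigmaS \<inter> baire_to_real -` U"
    then have "baire_to_real q \<in> U" by simp
    then obtain e where "e > 0" "{baire_to_real q ..< baire_to_real q + e} \<subseteq> U"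
      using \<open>openin sorgenfrey U\<close> unfolding openin_sorgenfrey by blast
    obtain m where "(1/2::real)^m < e"
      using real_arch_pow_inv[of e "1/2"] \<open>e > 0\<close> by auto
    obtain d where "d \<le> (1/2)^m" and
      img: "baire_to_real ` sigmaS_basic q (Suc m) = {baire_to_real q ..< baire_to_real q + d}"
      by (rule baire_to_real_basic)
    have "d < e" using \<open>d \<le> (1/2)^m\<close> \<open>(1/2)^m < e\<close> by linarith
    then have "baire_to_real ` sigmaS_basic q (Suc m) \<subseteq> U"
      unfolding img using \<open>{baire_to_real q ..< baire_to_real q + e} \<subseteq> U\<close> by auto
    then show "\<exists>m. sigmaS_basic q m \<subseteq> topspace sigmaS \<inter> baire_to_real -` U"
      by (intro exI[of _ "Suc m"]) (simp add: image_subset_iff_subset_vimage)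
  qed
qed

lemma open_map_baire_to_real: "open_map sigmaS sorgenfrey baire_to_real"
  unfolding open_map_def openin_sorgenfrey
proof (intro allI impI ballI)
  fix U u assume U: "openin sigmaS U" and "u \<in> baire_to_real ` U"
  then obtain q where q: "q \<in> U" "u = baire_to_real q" by blast
  then obtain m where "sigmaS_basic q m \<subseteq> U" using U unfolding openin_sigmaS by blast
  moreover have "sigmaS_basic q (Suc m) \<subseteq> sigmaS_basic q m" by (simp add: sigmaS_basic_antimono)
  ultimately have "sigmaS_basic q (Suc m) \<subseteq> U" by (rule order_trans[rotated])
  moreover obtain d where "0 < d"
    and img: "baire_to_real ` sigmaS_basic q (Suc m) = {baire_to_real q ..< baire_to_real q + d}"
    by (rule baire_to_real_basic)
  ultimately have "{u ..< u + d} \<subseteq> baire_to_real ` U" using q(2) img by (metis image_mono)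
  with \<open>0 < d\<close> show "\<exists>e>0. {u..<u + e} \<subseteq> baire_to_real ` U" by blast
qed

theorem mainTheorem9:
  shows "sorgenfrey homeomorphic_space sigmaS"
proof -
  have "homeomorphic_map sigmaS sorgenfrey baire_to_real"
    using continuous_map_baire_to_real open_map_baire_to_real bij_baire_to_real
    by (simp add: bijective_open_imp_homeomorphic_map bij_is_inj bij_is_surj)
  then show ?thesis
    using homeomorphic_map_imp_homeomorphic_space homeomorphic_space_sym by blast
qed

end
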